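(* Assume $|M|\ge 2$. Let $(T_{opt},B_{opt})$ be an optimal solution of an instance of MEMTCS and let $T_I$ be a minimum isotropic scattering tree for $M$. Then $\sum_{u\in nl(T_{opt})}|B_{opt}(u)|\ \ge\ \Xi(T_I)-|d^+(T_{opt})|+1$.
   Context: Let $G=(V,E)$ be a finite, simple, undirected, connected graph with $|V|\ge 2$. Fix a positive integer $K$ and, for every $u\in V$, a nonempty set $\Gamma(u)\subseteq\{1,\dots,K\}$. For a tree $T$, $N(T)$ is its vertex set, $nb_T(u)$ the neighbours of $u$ in $T$, and $d^+(T)$ the set of vertices of degree greater than one in $T$; if $T$ is rooted, $nl(T)$ is its set of non-leaf vertices and $child(u,T)$ the set of children of $u$. A hitting set of a collection $\mathcal C$ of subsets of a finite set $\mathcal F$ is a subset of $\mathcal F$ meeting every member of $\mathcal C$. For a tree $T$ in $G$ and $u\in d^+(T)$, let $\Upsilon(u,T)$ be a minimum-cardinality hitting set of $\{\Gamma(v): v\in nb_T(u)\}$, and let $\Xi(T)=\sum_{u\in d^+(T)}|\Upsilon(u,T)|$. A minimum isotropic scattering tree $T_I$ for $M$ is a tree in $G$ with $M\subseteq N(T_I)$ minimizing $\Xi$ among all such trees. An instance of MEMTCS consists of $G,K,\Gamma$, a terminal set $M\subseteq V$, a source $s\in M$, and reals $e_s\ge e_r\ge 0$. A multicast tree is a subtree $T$ of $G$ with $M\subseteq N(T)$, rooted at $s$. A feasible schedule for $T$ is a function $B: nl(T)\to 2^{\{1,\dots,K\}}$ such that each $B(u)$ is a hitting set of $\{\Gamma(v):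 v\in child(u,T)\}$. Its cost is $\Pi(T,B)=\sum_{u\in nl(T)}|B(u)|\,e_s+(|N(T)|-1)\,e_r$. An optimal solution $(T_{opt},B_{opt})$ minimizes $\Pi$ over all pairs of a multicast tree and a feasible schedule for it. *)

theory Defs
  imports Complex_Main
begin

(* Graphs: vertex set V :: 'a set, edge set E :: 'a set set (undirected edges {u,v}, u ~= v).
   A subgraph / tree is a pair (N, F) of a vertex set and an edge set. *)

definition simple_graph :: "'a set \<Rightarrow> 'a set set \<Rightarrow> bool" where
  "simple_graph V E \<longleftrightarrow> finite V \<and>
     (\<forall>e\<in>E. \<exists>u v. u \<noteq> v \<and> e = {u, v} \<and> u \<in> V \<and> v \<in> V)"

definition adj :: "'a set set \<Rightarrow> ('a \<times> 'a) set" where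
  "adj F = {(x, y). {x, y} \<in> F}"

definition reach :: "'a set set \<Rightarrow> 'a \<Rightarrow> 'a \<Rightarrow> bool" where
  "reach F u v \<longleftrightarrow> (u, v) \<in> (adj F)\<^sup>*"

definition connected_on :: "'a set \<Rightarrow> 'a set set \<Rightarrow> bool" where
  "connected_on N F \<longleftrightarrow> (\<forall>u\<in>N. \<forall>v\<in>N. reach F u v)"

definition connected_graph :: "'a set \<Rightarrow> 'a set set \<Rightarrow> bool" where
  "connected_graph V E \<longleftrightarrow> simple_graph V E \<and> connected_on V E"

(* A tree in G: a subgraph (N,F) of G, with nonempty finite vertex set, which is connected
   and acyclic; acyclicity is expressed as: every edge is a bridge (minimally connected). *)
definition tree_in :: "'a set \<Rightarrow> 'a set set \<Rightarrow> 'a set \<times> 'a set set \<Rightarrow> bool" where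
  "tree_in V E T \<longleftrightarrow> (case T of (N, F) \<Rightarrow>
     N \<noteq> {} \<and> finite N \<and> N \<subseteq> V \<and> F \<subseteq> E \<and> (\<forall>e\<in>F. e \<subseteq> N) \<and>
     connected_on N F \<and> (\<forall>e\<in>F. \<not> connected_on N (F - {e})))"

definition Nodes :: "'a set \<times> 'a set set \<Rightarrow> 'a set" where
  "Nodes T = fst T"

definition nb :: "'a set \<times> 'a set set \<Rightarrow> 'a \<Rightarrow> 'a set" where
  "nb T u = {v. {u, v} \<in> snd T}"

definition dplus :: "'a set \<times> 'a set set \<Rightarrow> 'a set" where
  "dplus T = {u \<in> Nodes T. card (nb T u) > 1}"

definition child :: "'a \<Rightarrow> 'a set \<times> 'a set set \<Rightarrow> 'a \<Rightarrow> 'a set" where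
  "child s T u = {v \<in> nb T u. \<not> reach (snd T - {{u, v}}) v s}"

definition nl :: "'a \<Rightarrow> 'a set \<times> 'a set set \<Rightarrow> 'a set" where
  "nl s T = {u \<in> Nodes T. child s T u \<noteq> {}}"

definition hitting_set :: "nat \<Rightarrow> nat set set \<Rightarrow> nat set \<Rightarrow> bool" where
  "hitting_set K C H \<longleftrightarrow> H \<subseteq> {1..K} \<and> (\<forall>X\<in>C. H \<inter> X \<noteq> {})"

definition min_hs_card :: "nat \<Rightarrow> nat set set \<Rightarrow> nat" where
  "min_hs_card K C = (LEAST n. \<exists>H. hitting_set K C H \<and> card H = n)"

definition Xi :: "nat \<Rightarrow> ('a \<Rightarrow> nat set) \<Rightarrow> 'a set \<times> 'a set set \<Rightarrow> nat" where
  "Xi K \<Gamma> T = (\<Sum>u\<in>dplus T. min_hs_card K (\<Gamma> ` nb T u))"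

definition min_isotropic_scattering_tree ::
  "'a set \<Rightarrow> 'a set set \<Rightarrow> nat \<Rightarrow> ('a \<Rightarrow> nat set) \<Rightarrow> 'a set \<Rightarrow> 'a set \<times> 'a set set \<Rightarrow> bool" where
  "min_isotropic_scattering_tree V E K \<Gamma> M T \<longleftrightarrow>
     tree_in V E T \<and> M \<subseteq> Nodes T \<and>
     (\<forall>T'. tree_in V E T' \<and> M \<subseteq> Nodes T' \<longrightarrow> Xi K \<Gamma> T \<le> Xi K \<Gamma> T')"

definition multicast_tree :: "'a set \<Rightarrow> 'a set set \<Rightarrow> 'a set \<Rightarrow> 'a set \<times> 'a set set \<Rightarrow> bool" where
  "multicast_tree V E M T \<longleftrightarrow> tree_in V E T \<and> M \<subseteq> Nodes T"

definition feasible_schedule ::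
  "nat \<Rightarrow> ('a \<Rightarrow> nat set) \<Rightarrow> 'a \<Rightarrow> 'a set \<times> 'a set set \<Rightarrow> ('a \<Rightarrow> nat set) \<Rightarrow> bool" where
  "feasible_schedule K \<Gamma> s T B \<longleftrightarrow>
     (\<forall>u\<in>nl s T. hitting_set K (\<Gamma> ` child s T u) (B u))"

definition cost ::
  "real \<Rightarrow> real \<Rightarrow> 'a \<Rightarrow> 'a set \<times> 'a set set \<Rightarrow> ('a \<Rightarrow> nat set) \<Rightarrow> real" where
  "cost e_s e_r s T B = (\<Sum>u\<in>nl s T. real (card (B u)) * e_s) + (real (card (Nodes T)) - 1) * e_r"

definition MEMTCS_optimal ::
  "'a set \<Rightarrow> 'a set set \<Rightarrow> nat \<Rightarrow> ('a \<Rightarrow> nat set) \<Rightarrow> 'a set \<Rightarrow> 'a \<Rightarrow> real \<Rightarrow> real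
    \<Rightarrow> 'a set \<times> 'a set set \<Rightarrow> ('a \<Rightarrow> nat set) \<Rightarrow> bool" where
  "MEMTCS_optimal V E K \<Gamma> M s e_s e_r T B \<longleftrightarrow>
     multicast_tree V E M T \<and> feasible_schedule K \<Gamma> s T B \<and>
     (\<forall>T' B'. multicast_tree V E M T' \<and> feasible_schedule K \<Gamma> s T' B' \<longrightarrow>
        cost e_s e_r s T B \<le> cost e_s e_r s T' B')"

end

theory Submission
  imports Defs
begin

(* In a tree T rooted
   at s, call the neighbours of u that are not children of u its parents.  Removing an edge
   of a tree disconnects its endpoints, and from this one shows that every vertex has at most
   one parent and the root has none.  Hence a hitting set B(u) of the children's channel sets
   extends, by one channel per parent, to a hitting set of all neighbours' channel sets, so
     |Upsilon(u,T)| <= |B(u)| + [u ~= s]   for every u in d+(T).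
   Every vertex of degree > 1 has a child, so d+(T) is contained in nl(T); when T has a
   vertex other than s, the root s is a non-leaf as well.  Summing the local bound over d+(T)
   gives Xi(T) <= sum_{nl(T)} |B(u)| + |d+(T)| - 1 (if s is not in d+(T), the missing -1 is
   paid by |B(s)| >= 1).  The theorem follows since Xi(T_I) <= Xi(T_opt) by minimality of T_I. *)

lemma reach_sym: "reach F x y \<Longrightarrow> reach F y x"
proof -
  have "converse (adj F) = adj F" unfolding adj_def by (auto simp: insert_commute)
  then show "reach F x y \<Longrightarrow> reach F y x"
    unfolding reach_def by (metis converse_iff rtrancl_converseI)
qed

lemma reach_mono: "F \<subseteq> G \<Longrightarrow> reach F x y \<Longrightarrow> reach G x y"
  unfolding reach_def adj_def by (erule rtrancl_mono[THEN subsetD, rotated]) auto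

lemma reach_trans: "reach F x y \<Longrightarrow> reach F y z \<Longrightarrow> reach F x z"
  unfolding reach_def by simp

lemma reach_edge: "{x, y} \<in> F \<Longrightarrow> reach F x y"
  unfolding reach_def adj_def by auto

lemma reach_split:
  assumes "reach F x y"
  shows "reach (F - {{a, b}}) x y \<or> reach (F - {{a, b}}) x a \<or> reach (F - {{a, b}}) x b"
  using assms unfolding reach_def
proof (induction rule: rtrancl_induct)
  case (step y z)
  show ?case
  proof (cases "{y, z} = {a, b}")
    case True
    then have "y = a \<or> y = b" by (metis doubleton_eq_iff)
    then show ?thesis using step.IH by auto
  next
    case False
    then have "(y, z) \<in> adj (F - {{a, b}})" using step.hyps(2) unfolding adj_def by auto
    then show ?thesis using step.IH by (meson rtrancl.rtrancl_into_rtrancl)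
  qed
qed simp

lemma reach_without_edge:
  assumes "reach (F - {{u, v}}) u v" and "reach F x y"
  shows "reach (F - {{u, v}}) x y"
proof -
  have "adj F \<subseteq> (adj (F - {{u, v}}))\<^sup>*"
  proof
    fix p assume "p \<in> adj F"
    then obtain x' y' where p: "p = (x', y')" "{x', y'} \<in> F" unfolding adj_def by auto
    show "p \<in> (adj (F - {{u, v}}))\<^sup>*"
    proof (cases "{x', y'} = {u, v}")
      case True
      then have "reach (F - {{u, v}}) x' y'"
        using assms(1) reach_sym by (metis doubleton_eq_iff)
      then show ?thesis using p unfolding reach_def by simp
    next
      case False
      then show ?thesis using p unfolding adj_def by auto
    qed
  qed
  then show ?thesis
    using assms(2) rtrancl_subset_rtrancl unfolding reach_def by blast
qed

lemma tree_edge_bridge: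
  assumes "tree_in V E (N, F)" and "{u, v} \<in> F"
  shows "\<not> reach (F - {{u, v}}) v u"
proof
  assume "reach (F - {{u, v}}) v u"
  then have uv: "reach (F - {{u, v}}) u v" by (rule reach_sym)
  have "connected_on N F" using assms(1) unfolding tree_in_def by auto
  then have "connected_on N (F - {{u, v}})"
    unfolding connected_on_def using reach_without_edge[OF uv] by blast
  then show False using assms unfolding tree_in_def by auto
qed

definition parents :: "'a \<Rightarrow> 'a set \<times> 'a set set \<Rightarrow> 'a \<Rightarrow> 'a set" where
  "parents s T u = nb T u - child s T u"

lemma nb_children_parents: "nb T u = child s T u \<union> parents s T u"
  unfolding parents_def child_def by auto

lemma parents_iff: "v \<in> parents s (N, F) u \<longleftrightarrow> {u, v} \<in> F \<and> reach (F - {{u, v}}) v s"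
  unfolding parents_def child_def nb_def by auto

text \<open>Two distinct parents would give two disjoint routes from u to the root, i.e. a cycle.\<close>

lemma parent_unique:
  assumes t: "tree_in V E (N, F)"
    and p1: "v1 \<in> parents s (N, F) u" and p2: "v2 \<in> parents s (N, F) u"
  shows "v1 = v2"
proof (rule ccontr)
  assume ne: "v1 \<noteq> v2"
  let ?F1 = "F - {{u, v1}}" and ?F2 = "F - {{u, v2}}"
  have e1: "{u, v1} \<in> F" and r1: "reach ?F1 v1 s" using p1 by (auto simp: parents_iff)
  have e2: "{u, v2} \<in> F" and r2: "reach ?F2 v2 s" using p2 by (auto simp: parents_iff)
  have b1: "\<not> reach ?F1 v1 u" and b2: "\<not> reach ?F2 v2 u"
    using tree_edge_bridge[OF t e1] tree_edge_bridge[OF t e2] .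
  have "{u, v2} \<noteq> {u, v1}" using ne by (simp add: doubleton_eq_iff)
  then have e2_in_F1: "{v2, u} \<in> ?F1" using e2 by (simp add: insert_commute)
  have no_v2_s: "\<not> reach ?F1 v2 s"
  proof
    assume "reach ?F1 v2 s"
    then have "reach ?F1 v1 v2" by (rule reach_trans[OF r1 reach_sym])
    then show False using b1 reach_trans[OF _ reach_edge[OF e2_in_F1]] by blast
  qed
  have sub1: "?F2 - {{u, v1}} \<subseteq> ?F1" and sub2: "?F2 - {{u, v1}} \<subseteq> ?F2" by auto
  consider "reach (?F2 - {{u, v1}}) v2 s" | "reach (?F2 - {{u, v1}}) v2 u"
    | "reach (?F2 - {{u, v1}}) v2 v1"
    using reach_split[OF r2] by blast
  then show False
  proof cases
    case 1 then show False using no_v2_s reach_mono[OF sub1] by blast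
  next
    case 2 then show False using b2 reach_mono[OF sub2] by blast
  next
    case 3
    then have "reach ?F1 v2 v1" using reach_mono[OF sub1] by blast
    then show False using no_v2_s reach_trans[OF _ r1] by blast
  qed
qed

lemma card_parents_le_1:
  assumes "tree_in V E (N, F)"
  shows "card (parents s (N, F) u) \<le> 1"
proof (cases "parents s (N, F) u = {}")
  case False
  then obtain p where p: "p \<in> parents s (N, F) u" by blast
  have "parents s (N, F) u \<subseteq> {p}" using parent_unique[OF assms _ p] by blast
  then have "card (parents s (N, F) u) \<le> card {p}" by (rule card_mono[rotated]) simp
  then show ?thesis by simp
qed simp

lemma parents_root:
  assumes "tree_in V E (N, F)"
  shows "parents s (N, F) s = {}"
proof -
  have "v \<notin> parents s (N, F) s" for v
    using tree_edge_bridge[OF assms, of s v] by (simp add: parents_iff)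
  then show ?thesis by blast
qed

lemma dplus_subset_nl:
  assumes "tree_in V E (N, F)"
  shows "dplus (N, F) \<subseteq> nl s (N, F)"
proof
  fix u assume u: "u \<in> dplus (N, F)"
  have "child s (N, F) u \<noteq> {}"
  proof
    assume "child s (N, F) u = {}"
    then have "nb (N, F) u = parents s (N, F) u"
      using nb_children_parents[of "(N, F)" u s] by simp
    then have "card (nb (N, F) u) \<le> 1" using card_parents_le_1[OF assms] by simp
    then show False using u unfolding dplus_def by simp
  qed
  then show "u \<in> nl s (N, F)" using u unfolding dplus_def nl_def by simp
qed

lemma root_in_nl:
  assumes t: "tree_in V E (N, F)" and "s \<in> N" "m \<in> N" "m \<noteq> s"
  shows "s \<in> nl s (N, F)"
proof -
  have "reach F s m" using t assms(2,3) unfolding tree_in_def connected_on_def by auto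
  then obtain y where "(s, y) \<in> adj F"
    using assms(4) unfolding reach_def by (metis converse_rtranclE)
  then have "y \<in> nb (N, F) s" unfolding adj_def nb_def by simp
  then have "y \<in> child s (N, F) s"
    using parents_root[OF t, of s] nb_children_parents[of "(N, F)" s s] by simp
  then show ?thesis using assms(2) unfolding nl_def Nodes_def by auto
qed

text \<open>A hitting set for the sets indexed by A extends to one for A \<union> P by adding one
  element of each (nonempty) set indexed by P.\<close>

lemma min_hs_card_extend:
  assumes hs: "hitting_set K (\<Gamma> ` A) H"
    and P: "finite P" "\<forall>v\<in>P. \<Gamma> v \<noteq> {} \<and> \<Gamma> v \<subseteq> {1..K}"
  shows "min_hs_card K (\<Gamma> ` (A \<union> P)) \<le> card H + card P"
proof -
  define g where "g v = (SOME x. x \<in> \<Gamma> v)" for v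
  have g: "g v \<in> \<Gamma> v \<inter> {1..K}" if "v \<in> P" for v
    unfolding g_def using P(2) that by (metis IntI ex_in_conv someI_ex subsetD)
  have "hitting_set K (\<Gamma> ` (A \<union> P)) (H \<union> g ` P)"
    unfolding hitting_set_def
  proof (intro conjI ballI)
    show "H \<union> g ` P \<subseteq> {1..K}" using hs g unfolding hitting_set_def by blast
  next
    fix X assume "X \<in> \<Gamma> ` (A \<union> P)"
    then show "(H \<union> g ` P) \<inter> X \<noteq> {}" using hs g unfolding hitting_set_def by blast
  qed
  then have "min_hs_card K (\<Gamma> ` (A \<union> P)) \<le> card (H \<union> g ` P)"
    unfolding min_hs_card_def by (intro Least_le) blast
  also have "\<dots> \<le> card H + card (g ` P)" by (rule card_Un_le)
  also have "\<dots> \<le> card H + card P" using P(1) by (simp add: card_image_le)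
  finally show ?thesis .
qed

text \<open>A schedule entry B(u) serves the children of u; the at most one parent costs one more
  channel, except at the root.\<close>

lemma local_hs_bound:
  assumes t: "tree_in V E (N, F)"
    and \<Gamma>: "\<forall>u\<in>V. \<Gamma> u \<noteq> {} \<and> \<Gamma> u \<subseteq> {1..K}"
    and hs: "hitting_set K (\<Gamma> ` child s (N, F) u) Bu"
  shows "min_hs_card K (\<Gamma> ` nb (N, F) u) \<le> card Bu + (if u = s then 0 else 1)"
proof -
  have "parents s (N, F) u \<subseteq> N" "N \<subseteq> V" "finite N"
    using t unfolding tree_in_def parents_def nb_def by auto
  then have "min_hs_card K (\<Gamma> ` (child s (N, F) u \<union> parents s (N, F) u))
      \<le> card Bu + card (parents s (N, F) u)"
    using \<Gamma> by (intro min_hs_card_extend[OF hs]) (auto intro: finite_subset)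
  then show ?thesis
    using card_parents_le_1[OF t, of s u] parents_root[OF t, of s]
    by (auto simp: nb_children_parents[symmetric])
qed

lemma Xi_le_schedule:
  assumes t: "tree_in V E (N, F)"
    and \<Gamma>: "\<forall>u\<in>V. \<Gamma> u \<noteq> {} \<and> \<Gamma> u \<subseteq> {1..K}"
    and B: "feasible_schedule K \<Gamma> s (N, F) B"
    and s: "s \<in> nl s (N, F)"
  shows "int (Xi K \<Gamma> (N, F)) \<le>
           int (\<Sum>u\<in>nl s (N, F). card (B u)) + int (card (dplus (N, F))) - 1"
proof -
  let ?D = "dplus (N, F)" and ?NL = "nl s (N, F)"
  have fin: "finite ?NL" "finite ?D"
    using t unfolding tree_in_def nl_def dplus_def Nodes_def by auto
  have DNL: "?D \<subseteq> ?NL" by (rule dplus_subset_nl[OF t])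
  have hs: "hitting_set K (\<Gamma> ` child s (N, F) u) (B u)" if "u \<in> ?NL" for u
    using B that unfolding feasible_schedule_def by blast
  have Bs: "card (B s) \<ge> 1"
  proof -
    obtain v where "v \<in> child s (N, F) s" using s unfolding nl_def by blast
    then have "B s \<noteq> {}" and "finite (B s)"
      using hs[OF s] unfolding hitting_set_def by (auto intro: finite_subset)
    then show ?thesis by (simp add: Suc_le_eq card_gt_0_iff)
  qed
  have "Xi K \<Gamma> (N, F) \<le> (\<Sum>u\<in>?D. card (B u) + (if u = s then 0 else 1))"
    unfolding Xi_def by (rule sum_mono) (use local_hs_bound[OF t \<Gamma> hs] DNL in blast)
  also have "\<dots> = (\<Sum>u\<in>?D. card (B u)) + card (?D - {s})"
    using fin(2) by (simp add: sum.distrib sum.If_cases Diff_eq)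
  finally have Xi: "Xi K \<Gamma> (N, F) \<le> (\<Sum>u\<in>?D. card (B u)) + card (?D - {s})" .
  have split: "(\<Sum>u\<in>?NL. card (B u)) = (\<Sum>u\<in>?D. card (B u)) + (\<Sum>u\<in>?NL - ?D. card (B u))"
    using sum.subset_diff[OF DNL fin(1), of "\<lambda>u. card (B u)"] by simp
  show ?thesis
  proof (cases "s \<in> ?D")
    case True
    then have "card (?D - {s}) + 1 = card ?D" using card_Suc_Diff1[OF fin(2)] by simp
    then show ?thesis using Xi split by linarith
  next
    case False
    then have "card (B s) \<le> (\<Sum>u\<in>?NL - ?D. card (B u))"
      using fin(1) s by (intro member_le_sum) auto
    moreover have "card (?D - {s}) = card ?D" using False by simp
    ultimately show ?thesis using Xi split Bs by linarith
  qed
qed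

theorem lemma6:
  fixes V :: "'a set" and E :: "'a set set" and K :: nat and \<Gamma> :: "'a \<Rightarrow> nat set"
    and M :: "'a set" and s :: 'a and e_s e_r :: real
    and T_opt T_I :: "'a set \<times> 'a set set" and B_opt :: "'a \<Rightarrow> nat set"
  assumes "connected_graph V E"
    and "card V \<ge> 2"
    and "K > 0"
    and "\<forall>u\<in>V. \<Gamma> u \<noteq> {} \<and> \<Gamma> u \<subseteq> {1..K}"
    and "M \<subseteq> V" and "s \<in> M" and "card M \<ge> 2"
    and "e_s \<ge> e_r" and "e_r \<ge> 0"
    and "MEMTCS_optimal V E K \<Gamma> M s e_s e_r T_opt B_opt"
    and "min_isotropic_scattering_tree V E K \<Gamma> M T_I"
  shows "int (\<Sum>u\<in>nl s T_opt. card (B_opt u)) \<ge>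
           int (Xi K \<Gamma> T_I) - int (card (dplus T_opt)) + 1"
proof -
  obtain N F where T: "T_opt = (N, F)" by fastforce
  have t: "tree_in V E (N, F)" and MN: "M \<subseteq> N"
    and B: "feasible_schedule K \<Gamma> s (N, F) B_opt"
    using assms(10) unfolding MEMTCS_optimal_def multicast_tree_def T Nodes_def by auto
  have XiI: "Xi K \<Gamma> T_I \<le> Xi K \<Gamma> (N, F)"
    using assms(10,11) unfolding min_isotropic_scattering_tree_def MEMTCS_optimal_def
      multicast_tree_def T by blast
  obtain m where "m \<in> M" "m \<noteq> s"
    using assms(7) by (metis card_le_Suc0_iff_eq not_less_eq_eq numeral_2_eq_2 card.infinite
        zero_le)
  then have "s \<in> nl s (N, F)" using root_in_nl[OF t] MN assms(6) by blast
  then show ?thesis using Xi_le_schedule[OF t assms(4) B] XiI unfolding T by linarith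
qed

end
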